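(* If the indefinite binary quadratic form $(A,B,C)$ over $\mathbb{Q}((1/T))$ is reduced, then the form $(C,B,A)$ is reduced.
   Context: $\mathbb{Q}((1/T))$ is the field of formal Laurent series in $1/T$ over $\mathbb{Q}$; $\deg$ of a nonzero series is the exponent of its leading term, $\deg0=-\infty$. A binary quadratic form $(A,B,C)$ is $AX^2+BXY+CY^2$ with $A,B,C\in\mathbb{Q}((1/T))$ not all in $\mathbb{Q}(T)$, discriminant $D=B^2-4AC$; indefinite means $D\ne0$ is a square in $\mathbb{Q}((1/T))$; a square root $\sqrt D$ is fixed (the same for both forms, which have the same discriminant). If $A\neq0$, the first and second roots are $f=\frac{\sqrt D-B}{2A}$ and $s=\frac{-\sqrt D-B}{2A}$. The form is reduced if $A\ne0$, $f\ne0$ and $\deg f<0<\deg s$. *)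

theory Defs
  imports "HOL-Computational_Algebra.Computational_Algebra" "HOL-Library.Extended_Real"
begin

text \<open>Q((1/T)) is modelled as rat fls, Laurent series in the variable X = 1/T.
  A series sum a_n X^n has T-degree equal to minus its X-subdegree.\<close>

type_synonym laurT = "rat fls"

definition degT :: "laurT \<Rightarrow> ereal" where
  "degT f = (if f = 0 then -\<infinity> else ereal (of_int (- fls_subdegree f)))"

text \<open>Membership in Q(T) = Q(X): f is a quotient of two polynomials.\<close>
definition in_QT :: "laurT \<Rightarrow> bool" where
  "in_QT f \<longleftrightarrow> (\<exists>p q :: rat poly. q \<noteq> 0 \<and>
      f * fps_to_fls (fps_of_poly q) = fps_to_fls (fps_of_poly p))"

definition is_form :: "laurT \<Rightarrow> laurT \<Rightarrow> laurT \<Rightarrow> bool" where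
  "is_form A B C \<longleftrightarrow> \<not> (in_QT A \<and> in_QT B \<and> in_QT C)"

definition disc :: "laurT \<Rightarrow> laurT \<Rightarrow> laurT \<Rightarrow> laurT" where
  "disc A B C = B^2 - 4 * A * C"

definition indefinite :: "laurT \<Rightarrow> laurT \<Rightarrow> laurT \<Rightarrow> bool" where
  "indefinite A B C \<longleftrightarrow> disc A B C \<noteq> 0 \<and> (\<exists>r. r^2 = disc A B C)"

definition first_root :: "laurT \<Rightarrow> laurT \<Rightarrow> laurT \<Rightarrow> laurT" where
  "first_root sqD A B = (sqD - B) / (2 * A)"

definition second_root :: "laurT \<Rightarrow> laurT \<Rightarrow> laurT \<Rightarrow> laurT" where
  "second_root sqD A B = (- sqD - B) / (2 * A)"

definition reduced :: "laurT \<Rightarrow> laurT \<Rightarrow> laurT \<Rightarrow> laurT \<Rightarrow> bool" where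
  "reduced sqD A B C \<longleftrightarrow> A \<noteq> 0 \<and> first_root sqD A B \<noteq> 0 \<and>
     degT (first_root sqD A B) < 0 \<and> 0 < degT (second_root sqD A B)"

end

theory Submission
  imports Defs
begin

text \<open>Because \<open>(\<surd>D - B)(-\<surd>D - B) = B\<^sup>2 - D = 4AC\<close>, the first root of \<open>(C,B,A)\<close> is the
  reciprocal of the second root of \<open>(A,B,C)\<close> and its second root is the reciprocal of the
  first one. Inversion negates degrees, so the two degree conditions of reducedness are exchanged.\<close>

lemma degT_inverse:
  fixes x :: laurT
  assumes "x \<noteq> 0"
  shows "degT (inverse x) = - degT x"
  using assms by (simp add: degT_def fls_inverse_subdegree)

lemma root_numerators_mult:
  assumes "sqD^2 = disc A B C"
  shows "(sqD - B) * (- sqD - B) = 4 * A * C"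
proof -
  have "(sqD - B) * (- sqD - B) = B^2 - sqD^2"
    by (simp add: algebra_simps power2_eq_square)
  with assms show ?thesis by (simp add: disc_def)
qed

lemma first_root_swap:
  assumes "sqD^2 = disc A B C" and "A \<noteq> 0" and "C \<noteq> 0"
  shows "first_root sqD C B = inverse (second_root sqD A B)"
proof -
  have prod: "(sqD - B) * (- sqD - B) = 4 * A * C"
    using root_numerators_mult[OF assms(1)] .
  with assms(2,3) have "- sqD - B \<noteq> 0" by auto
  with prod assms(3) show ?thesis
    unfolding first_root_def second_root_def by (simp add: field_simps)
qed

lemma second_root_swap:
  assumes "sqD^2 = disc A B C" and "A \<noteq> 0" and "C \<noteq> 0"
  shows "second_root sqD C B = inverse (first_root sqD A B)"
proof -
  have prod: "(sqD - B) * (- sqD - B) = 4 * A * C"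
    using root_numerators_mult[OF assms(1)] .
  with assms(2,3) have "sqD - B \<noteq> 0" by auto
  with prod assms(3) show ?thesis
    unfolding first_root_def second_root_def by (simp add: field_simps)
qed

lemma reduced_last_coeff_nonzero:
  assumes "sqD^2 = disc A B C" and "reduced sqD A B C"
  shows "C \<noteq> 0"
proof
  assume "C = 0"
  then have "(sqD - B) * (- sqD - B) = 0"
    using root_numerators_mult[OF assms(1)] by simp
  moreover have "sqD - B \<noteq> 0" and "- sqD - B \<noteq> 0"
    using assms(2) by (auto simp: reduced_def degT_def first_root_def second_root_def)
  ultimately show False by simp
qed

theorem proposition10:
  fixes A B C sqD :: laurT
  assumes "is_form A B C"
    and "indefinite A B C"
    and "sqD^2 = disc A B C"
    and "reduced sqD A B C"
  shows "reduced sqD C B A"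
proof -
  let ?f = "first_root sqD A B" and ?s = "second_root sqD A B"
  have "A \<noteq> 0" and "?f \<noteq> 0" and "degT ?f < 0" and "0 < degT ?s"
    using assms(4) by (auto simp: reduced_def)
  moreover have "?s \<noteq> 0"
    using \<open>0 < degT ?s\<close> by (auto simp: degT_def)
  moreover have "C \<noteq> 0"
    using reduced_last_coeff_nonzero[OF assms(3,4)] .
  ultimately show ?thesis
    using first_root_swap[OF assms(3)] second_root_swap[OF assms(3)]
    by (simp add: reduced_def degT_inverse ereal_uminus_less_reorder ereal_less_uminus_reorder)
qed

end
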